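(* Let $n,m$ be positive integers and $\mathbf a,\mathbf b\in\{0,1\}^n$. If the $(\mathbf a,\mathbf b)$-entry of $(A_n)^m$ is positive, then so is the $(\mathbf a,\mathbf b)$-entry of $(A_n)^{m+1}$. Furthermore, the $(\mathbf a,\mathbf b)$-entry of $(A_n)^m$ is positive if and only if $\mathbf a\trianglerighteq_z\mathbf b$ for some $z\le m$.
   Context: Dominance: $\mathbf v\trianglerighteq\mathbf w$ iff $\sum_{k\le i}v_k\ge\sum_{k\le i}w_k$ for all $i$. For $\mathbf v\in\mathbb N^n$, $\chi(\mathbf v)_i=1$ if $v_i>0$ and $0$ otherwise. For $\mathbf v,\mathbf w\in\mathbb N^n$ with $\mathbf v\trianglerighteq\mathbf w$ and $\chi(\mathbf v)\trianglerighteq\chi(\mathbf w)$, let $Z_{\mathbf v}=\{i:v_i=0\}$, $Z_{\mathbf w}=\{i:w_i=0\}$, and construct the matching $M\subseteq Z_{\mathbf v}\times Z_{\mathbf w}$ by repeatedly taking the largest unmatched index $i'\in Z_{\mathbf v}$ and matching it to the largest unmatched index in $Z_{\mathbf w}$ that is $\le i'$, until all of $Z_{\mathbf v}$ is matched. With $z=\max\{\max\{i-j:(i,j)\in M\},1\}$ one says $\mathbf v$ $z$-dominates $\mathbf w$, written $\mathbf v\trianglerighteq_z\mathbf w$ (this notation always presupposes $\mathbf v\trianglerighteq\mathbf w$ and $\chi(\mathbf v)\trianglerighteq\chi(\mathbf w)$). $A_n$ is the $2^n\times2^n$ matrix with rows and columns indexed by $\{0,1\}^n$, with $(A_n)_{\mathbf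 u,\mathbf v}=1$ if $\mathbf u\trianglerighteq_1\mathbf v$ and $0$ otherwise. *)

theory Defs
  imports Main
begin

text \<open>Vectors in N^n are lists of naturals of length n; position k of the list
  (0-based) is coordinate k+1 of the paper. Only differences of indices matter.\<close>

definition dominates :: "nat list \<Rightarrow> nat list \<Rightarrow> bool" where
  "dominates v w \<longleftrightarrow> length v = length w \<and>
     (\<forall>i\<le>length v. sum_list (take i v) \<ge> sum_list (take i w))"

definition chi :: "nat list \<Rightarrow> nat list" where
  "chi v = map (\<lambda>x. if x > 0 then 1 else 0) v"

definition zeros_desc :: "nat list \<Rightarrow> nat list" where
  "zeros_desc v = filter (\<lambda>i. v ! i = 0) (rev [0..<length v])"

fun greedy_match :: "nat list \<Rightarrow> nat list \<Rightarrow> (nat \<times> nat) list" where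
  "greedy_match [] W = []"
| "greedy_match (i # is) W =
     (let js = filter (\<lambda>j. j \<le> i) W in
      if js = [] then []
      else let j = Max (set js) in (i, j) # greedy_match is (remove1 j W))"

definition matching :: "nat list \<Rightarrow> nat list \<Rightarrow> (nat \<times> nat) list" where
  "matching v w = greedy_match (zeros_desc v) (zeros_desc w)"

definition zval :: "nat list \<Rightarrow> nat list \<Rightarrow> nat" where
  "zval v w = max (Max (insert 0 ((\<lambda>(i, j). i - j) ` set (matching v w)))) 1"

definition zdom :: "nat \<Rightarrow> nat list \<Rightarrow> nat list \<Rightarrow> bool" where
  "zdom z v w \<longleftrightarrow> dominates v w \<and> dominates (chi v) (chi w) \<and> z = zval v w"

definition bin :: "nat \<Rightarrow> nat list set" where
  "bin n = {xs. length xs = n \<and> set xs \<subseteq> {0, 1}}"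

definition A_entry :: "nat list \<Rightarrow> nat list \<Rightarrow> nat" where
  "A_entry u v = (if zdom 1 u v then 1 else 0)"

fun Apow :: "nat \<Rightarrow> nat \<Rightarrow> nat list \<Rightarrow> nat list \<Rightarrow> nat" where
  "Apow n 0 u v = (if u = v then 1 else 0)"
| "Apow n (Suc m) u v = (\<Sum>w\<in>bin n. Apow n m u w * A_entry w v)"

end

theory Submission
  imports Defs
begin

text \<open>Identify a 0/1 vector with the set of its zero positions. Dominance \<open>v \<unrhd> w\<close> says that
  every prefix of \<open>w\<close> has at least as many zeros as the same prefix of \<open>v\<close>; by a Hall-type
  argument this holds iff the zeros of \<open>v\<close> inject into those of \<open>w\<close> without moving right.
  An exchange argument shows that the greedy matching is then complete and order-preserving, and
  that its largest displacement is at most that of any such injection. So \<open>v \<unrhd>\<^sub>z w\<close> for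
  some \<open>z \<le> m\<close> iff the zeros of \<open>v\<close> can be moved order-preservingly onto zeros of \<open>w\<close>, each
  by at most \<open>m\<close> steps to the left. Such moves compose, adding their bounds, and a move by at
  most \<open>m + 1\<close> factors through an intermediate 0/1 vector as a move by at most \<open>m\<close> (send the
  zero at \<open>i\<close> to \<open>max (f i) (i - m)\<close>) followed by a move by at most 1. By induction on \<open>m\<close>,
  \<open>(A\<^sub>n\<^sup>m)\<^sub>a\<^sub>b > 0\<close> iff the zeros of \<open>a\<close> move onto those of \<open>b\<close> by at most \<open>m\<close>, a
  condition monotone in \<open>m\<close>.\<close>

lemma sorted_wrt_mem_cases:
  "sorted_wrt R xs \<Longrightarrow> x \<in> set xs \<Longrightarrow> y \<in> set xs \<Longrightarrow> x = y \<or> R x y \<or> R y x"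
  by (induction xs) auto

lemma exists_inj_leftward_if_card_le:
  fixes A B :: "nat set"
  assumes "\<And>q. q \<le> p \<Longrightarrow> card {i \<in> A. i < q} \<le> card {i \<in> B. i < q}"
  shows "\<exists>f. inj_on f {i \<in> A. i < p} \<and> (\<forall>i\<in>{i \<in> A. i < p}. f i \<in> B \<and> f i \<le> i)"
  using assms
proof (induction p)
  case (Suc p)
  then obtain f where f_inj: "inj_on f {i \<in> A. i < p}" and f: "\<forall>i\<in>{i \<in> A. i < p}. f i \<in> B \<and> f i \<le> i"
    by force
  show ?case
  proof (cases "p \<in> A")
    case False
    then have "{i \<in> A. i < Suc p} = {i \<in> A. i < p}"
      using less_Suc_eq by auto
    then show ?thesis
      using f_inj f by auto
  next
    case True
    have A_Suc: "{i \<in> A. i < Suc p} = insert p {i \<in> A. i < p}"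
      using True less_Suc_eq by auto
    have "card (f ` {i \<in> A. i < p}) < card {i \<in> A. i < Suc p}"
      unfolding A_Suc card_image[OF f_inj] by simp
    also have "\<dots> \<le> card {i \<in> B. i < Suc p}"
      using Suc.prems by blast
    finally have "\<not> {i \<in> B. i < Suc p} \<subseteq> f ` {i \<in> A. i < p}"
      using card_mono[of "f ` {i \<in> A. i < p}" "{i \<in> B. i < Suc p}"] by auto
    then obtain y where y: "y \<in> B" "y \<le> p" "y \<notin> f ` {i \<in> A. i < p}"
      by (auto simp: less_Suc_eq_le)
    have "inj_on (f(p := y)) {i \<in> A. i < Suc p}"
      unfolding A_Suc using f_inj y(3) by (auto simp: inj_on_def)
    moreover have "\<forall>i\<in>{i \<in> A. i < Suc p}. (f(p := y)) i \<in> B \<and> (f(p := y)) i \<le> i"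
      unfolding A_Suc using f y by auto
    ultimately show ?thesis
      by blast
  qed
qed simp

lemma greedy_match_Cons_cases:
  obtains (unmatched) "\<forall>j\<in>set W. i < j" "greedy_match (i # I) W = []"
  | (matched) j where "j \<in> set W" "j \<le> i" "\<And>j'. j' \<in> set W \<Longrightarrow> j' \<le> i \<Longrightarrow> j' \<le> j"
      "greedy_match (i # I) W = (i, j) # greedy_match I (remove1 j W)"
proof (cases "\<exists>j\<in>set W. j \<le> i")
  case False
  then show ?thesis
    by (intro unmatched) (auto simp: not_le filter_empty_conv)
next
  case True
  define j where "j = Max {j \<in> set W. j \<le> i}"
  have "j \<in> {j \<in> set W. j \<le> i}"
    unfolding j_def using True by (intro Max_in) auto
  moreover have "j' \<le> j" if "j' \<in> set W" "j' \<le> i" for j'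
    unfolding j_def using that by (intro Max_ge) auto
  moreover have "greedy_match (i # I) W = (i, j) # greedy_match I (remove1 j W)"
    using True by (auto simp: j_def Let_def filter_empty_conv)
  ultimately show ?thesis
    using matched by blast
qed

lemma in_set_greedy_matchD:
  "(i, j) \<in> set (greedy_match I W) \<Longrightarrow> i \<in> set I \<and> j \<in> set W \<and> j \<le> i"
proof (induction I arbitrary: W)
  case (Cons i0 I)
  then show ?case
    by (cases rule: greedy_match_Cons_cases[of W i0 I]) (auto dest: subsetD[OF set_remove1_subset])
qed simp

lemma greedy_match_sorted:
  assumes "distinct W" "sorted_wrt (>) I"
  shows "sorted_wrt (\<lambda>(i, j) (i', j'). i' < i \<and> j' < j) (greedy_match I W)"
  using assms
proof (induction I arbitrary: W)
  case (Cons i0 I)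
  show ?case
  proof (cases rule: greedy_match_Cons_cases[of W i0 I])
    case (matched j)
    have "i' < i0 \<and> j' < j" if "(i', j') \<in> set (greedy_match I (remove1 j W))" for i' j'
      using in_set_greedy_matchD[OF that] Cons.prems matched(3)[of j'] by (auto simp: le_less)
    then show ?thesis
      using matched(4) Cons by auto
  qed simp
qed simp

lemma greedy_match_complete:
  assumes "distinct W" "sorted_wrt (>) I" "inj_on f (set I)"
    and "\<And>i. i \<in> set I \<Longrightarrow> f i \<in> set W \<and> f i \<le> i \<and> i \<le> f i + z"
  shows "map fst (greedy_match I W) = I \<and> (\<forall>(i, j)\<in>set (greedy_match I W). i \<le> j + z)"
  using assms
proof (induction I arbitrary: W f)
  case (Cons i0 I)
  show ?case
  proof (cases rule: greedy_match_Cons_cases[of W i0 I])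
    case unmatched
    then show ?thesis
      using Cons.prems(4)[of i0] by auto
  next
    case (matched j)
    have fi0: "f i0 \<le> j" "i0 \<le> j + z"
      using Cons.prems(4)[of i0] matched(3) by force+
    \<comment> \<open>Exchange: the zero that \<open>f\<close> sends to \<open>j\<close> is redirected to \<open>f i0\<close>.\<close>
    define f' where "f' x = (if f x = j then f i0 else f x)" for x
    have "inj_on f' (set I)"
      using Cons.prems(2,3) unfolding f'_def inj_on_def by auto
    moreover have "f' x \<in> set (remove1 j W) \<and> f' x \<le> x \<and> x \<le> f' x + z" if "x \<in> set I" for x
      using that Cons.prems fi0 unfolding f'_def inj_on_def by force
    ultimately have "map fst (greedy_match I (remove1 j W)) = I \<and>
        (\<forall>(i, j)\<in>set (greedy_match I (remove1 j W)). i \<le> j + z)"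
      using Cons by (intro Cons.IH) auto
    then show ?thesis
      using matched(4) fi0 by auto
  qed
qed simp

definition zero_set :: "nat list \<Rightarrow> nat set" where
  "zero_set v = {i. i < length v \<and> v ! i = 0}"

lemma set_zeros_desc: "set (zeros_desc v) = zero_set v"
  by (auto simp: zeros_desc_def zero_set_def)

lemma distinct_zeros_desc: "distinct (zeros_desc v)"
  by (simp add: zeros_desc_def)

lemma sorted_zeros_desc: "sorted_wrt (>) (zeros_desc v)"
  by (simp add: zeros_desc_def sorted_wrt_filter sorted_wrt_rev)

lemma in_set_matchingD:
  "(i, j) \<in> set (matching v w) \<Longrightarrow> i \<in> zero_set v \<and> j \<in> zero_set w \<and> j \<le> i"
  using in_set_greedy_matchD set_zeros_desc unfolding matching_def by blast

lemma matching_complete: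
  assumes "inj_on f (zero_set v)"
    and "\<And>i. i \<in> zero_set v \<Longrightarrow> f i \<in> zero_set w \<and> f i \<le> i \<and> i \<le> f i + z"
  shows "map fst (matching v w) = zeros_desc v \<and> (\<forall>(i, j)\<in>set (matching v w). i \<le> j + z)"
  unfolding matching_def using assms
  by (intro greedy_match_complete[where f = f]) (simp_all add: set_zeros_desc distinct_zeros_desc sorted_zeros_desc)

lemma matching_sorted:
  "sorted_wrt (\<lambda>(i, j) (i', j'). i' < i \<and> j' < j) (matching v w)"
  unfolding matching_def by (intro greedy_match_sorted distinct_zeros_desc sorted_zeros_desc)

lemma one_le_zval: "1 \<le> zval v w"
  by (simp add: zval_def)

lemma zval_le_iff:
  "1 \<le> z \<Longrightarrow> zval v w \<le> z \<longleftrightarrow> (\<forall>(i, j)\<in>set (matching v w). i - j \<le> z)"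
  unfolding zval_def by (auto simp: Max_le_iff)

definition shift_matching :: "nat \<Rightarrow> nat list \<Rightarrow> nat list \<Rightarrow> bool" where
  "shift_matching z v w \<longleftrightarrow> (\<exists>f. strict_mono_on (zero_set v) f \<and>
     (\<forall>i\<in>zero_set v. f i \<in> zero_set w \<and> f i \<le> i \<and> i \<le> f i + z))"

lemma shift_matchingI:
  assumes "strict_mono_on (zero_set v) f"
    and "\<And>i. i \<in> zero_set v \<Longrightarrow> f i \<in> zero_set w \<and> f i \<le> i \<and> i \<le> f i + z"
  shows "shift_matching z v w"
  using assms unfolding shift_matching_def by blast

lemma shift_matchingE:
  assumes "shift_matching z v w"
  obtains f where "strict_mono_on (zero_set v) f"
    and "\<And>i. i \<in> zero_set v \<Longrightarrow> f i \<in> zero_set w \<and> f i \<le> i \<and> i \<le> f i + z"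
  using assms unfolding shift_matching_def by auto

lemma shift_matching_mono: "shift_matching z v w \<Longrightarrow> z \<le> z' \<Longrightarrow> shift_matching z' v w"
  by (elim shift_matchingE, rule shift_matchingI) (auto, meson add_left_mono order_trans)

lemma shift_matching_zval:
  assumes complete: "map fst (matching v w) = zeros_desc v"
  shows "shift_matching (zval v w) v w"
proof -
  let ?G = "matching v w"
  define f where "f i = the (map_of ?G i)" for i
  have pair: "(i, f i) \<in> set ?G" if "i \<in> zero_set v" for i
  proof -
    have "i \<in> fst ` set ?G"
      using that complete set_zeros_desc[of v] by (metis list.set_map)
    then obtain j where ij: "(i, j) \<in> set ?G"
      by force
    have "distinct (map fst ?G)"
      unfolding complete by (rule distinct_zeros_desc)
    then have "map_of ?G i = Some j"
      using ij by (rule map_of_is_SomeI)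
    then show ?thesis
      using ij by (simp add: f_def)
  qed
  have "strict_mono_on (zero_set v) f"
  proof (rule strict_mono_onI)
    fix i i' assume i: "i \<in> zero_set v" and i': "i' \<in> zero_set v" and "i < i'"
    then show "f i < f i'"
      using sorted_wrt_mem_cases[OF matching_sorted pair[OF i] pair[OF i']] by auto
  qed
  moreover have "f i \<in> zero_set w \<and> f i \<le> i \<and> i \<le> f i + zval v w" if "i \<in> zero_set v" for i
  proof -
    have "i - f i \<le> zval v w"
      using zval_le_iff[of "zval v w" v w] one_le_zval[of v w] pair[OF that] by auto
    then show ?thesis
      using in_set_matchingD[OF pair[OF that]] by auto
  qed
  ultimately show ?thesis
    by (rule shift_matchingI)
qed

lemma zval_le_if_shift_matching:
  assumes "1 \<le> z" "shift_matching z v w"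
  shows "zval v w \<le> z"
proof -
  obtain f where f_mono: "strict_mono_on (zero_set v) f"
    and f: "\<And>i. i \<in> zero_set v \<Longrightarrow> f i \<in> zero_set w \<and> f i \<le> i \<and> i \<le> f i + z"
    using assms(2) by (metis shift_matchingE)
  have "\<forall>(i, j)\<in>set (matching v w). i \<le> j + z"
    using matching_complete[OF strict_mono_on_imp_inj_on[OF f_mono] f] by blast
  then show ?thesis
    using zval_le_iff[OF assms(1)] by auto
qed

lemma sum_take_add_card_zeros:
  assumes "set v \<subseteq> {0, 1}" "q \<le> length v"
  shows "sum_list (take q v) + card {i \<in> zero_set v. i < q} = q"
  using assms(2)
proof (induction q)
  case (Suc q)
  then have IH: "sum_list (take q v) + card {i \<in> zero_set v. i < q} = q"
    by simp
  have take_Suc: "take (Suc q) v = take q v @ [v ! q]"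
    using Suc.prems by (simp add: take_Suc_conv_app_nth)
  have "v ! q \<in> {0, 1}"
    using assms(1) Suc.prems by (meson Suc_le_lessD nth_mem subsetD)
  then consider "v ! q = 0" | "v ! q = 1"
    by fastforce
  then show ?case
  proof cases
    case 1
    then have "{i \<in> zero_set v. i < Suc q} = insert q {i \<in> zero_set v. i < q}"
      using Suc.prems by (auto simp: zero_set_def less_Suc_eq)
    then show ?thesis
      using IH take_Suc 1 by simp
  next
    case 2
    then have "{i \<in> zero_set v. i < Suc q} = {i \<in> zero_set v. i < q}"
      by (auto simp: zero_set_def less_Suc_eq)
    then show ?thesis
      using IH take_Suc 2 by simp
  qed
qed simp

lemma dominates_bin_iff:
  assumes "a \<in> bin n" "b \<in> bin n"
  shows "dominates a b \<longleftrightarrow> (\<forall>q\<le>n. card {i \<in> zero_set a. i < q} \<le> card {i \<in> zero_set b. i < q})"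
proof -
  have "sum_list (take q b) \<le> sum_list (take q a) \<longleftrightarrow>
      card {i \<in> zero_set a. i < q} \<le> card {i \<in> zero_set b. i < q}" if "q \<le> n" for q
    using assms that sum_take_add_card_zeros[of a q] sum_take_add_card_zeros[of b q]
    unfolding bin_def by simp linarith
  then show ?thesis
    using assms unfolding dominates_def bin_def by auto
qed

lemma shift_matching_imp_dominates:
  assumes "a \<in> bin n" "b \<in> bin n" "shift_matching z a b"
  shows "dominates a b"
proof -
  obtain f where f_mono: "strict_mono_on (zero_set a) f"
    and f: "\<And>i. i \<in> zero_set a \<Longrightarrow> f i \<in> zero_set b \<and> f i \<le> i \<and> i \<le> f i + z"
    using assms(3) by (metis shift_matchingE)
  have "card {i \<in> zero_set a. i < q} \<le> card {i \<in> zero_set b. i < q}" for q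
  proof (rule card_inj_on_le)
    show "inj_on f {i \<in> zero_set a. i < q}"
      using strict_mono_on_imp_inj_on[OF f_mono] by (rule inj_on_subset) auto
    show "f ` {i \<in> zero_set a. i < q} \<subseteq> {i \<in> zero_set b. i < q}"
      using f by fastforce
  qed (simp add: zero_set_def)
  then show ?thesis
    using dominates_bin_iff[OF assms(1,2)] by blast
qed

lemma chi_bin: "v \<in> bin n \<Longrightarrow> chi v = v"
  unfolding chi_def bin_def by (rule map_idI) auto

lemma zero_set_bin: "v \<in> bin n \<Longrightarrow> zero_set v \<subseteq> {..<n}"
  unfolding zero_set_def bin_def by auto

lemma shift_matching_zval_if_dominates:
  assumes "a \<in> bin n" "b \<in> bin n" "dominates a b"
  shows "shift_matching (zval a b) a b"
proof -
  have zeros_below_n: "{i \<in> zero_set v. i < n} = zero_set v" if "v \<in> bin n" for v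
    using zero_set_bin[OF that] by auto
  obtain f where f_inj: "inj_on f (zero_set a)" and f: "\<forall>i\<in>zero_set a. f i \<in> zero_set b \<and> f i \<le> i"
    using exists_inj_leftward_if_card_le[of n "zero_set a" "zero_set b"] assms(3)
      dominates_bin_iff[OF assms(1,2)] zeros_below_n[OF assms(1)] by auto
  have "map fst (matching a b) = zeros_desc a"
    using matching_complete[OF f_inj, of b n] f zero_set_bin[OF assms(1)] by fastforce
  then show ?thesis
    by (rule shift_matching_zval)
qed

lemma shift_matching_iff_zdom:
  assumes "a \<in> bin n" "b \<in> bin n" "1 \<le> z"
  shows "shift_matching z a b \<longleftrightarrow> (\<exists>z'\<le>z. zdom z' a b)"
proof -
  have "shift_matching z a b \<longleftrightarrow> dominates a b \<and> zval a b \<le> z"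
    using shift_matching_imp_dominates[OF assms(1,2)] zval_le_if_shift_matching[OF assms(3)]
      shift_matching_zval_if_dominates[OF assms(1,2)] shift_matching_mono by blast
  moreover have "(\<exists>z'\<le>z. zdom z' a b) \<longleftrightarrow> dominates a b \<and> zval a b \<le> z"
    using chi_bin assms unfolding zdom_def by auto
  ultimately show ?thesis
    by simp
qed

lemma shift_matching_trans:
  assumes "shift_matching z1 u v" "shift_matching z2 v w"
  shows "shift_matching (z1 + z2) u w"
proof -
  obtain f where f_mono: "strict_mono_on (zero_set u) f"
    and f: "\<And>i. i \<in> zero_set u \<Longrightarrow> f i \<in> zero_set v \<and> f i \<le> i \<and> i \<le> f i + z1"
    using assms(1) by (metis shift_matchingE)
  obtain g where g_mono: "strict_mono_on (zero_set v) g"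
    and g: "\<And>i. i \<in> zero_set v \<Longrightarrow> g i \<in> zero_set w \<and> g i \<le> i \<and> i \<le> g i + z2"
    using assms(2) by (metis shift_matchingE)
  have "strict_mono_on (zero_set u) (g \<circ> f)"
    using f by (auto intro!: strict_mono_onI strict_mono_onD[OF g_mono] strict_mono_onD[OF f_mono])
  moreover have "(g \<circ> f) i \<in> zero_set w \<and> (g \<circ> f) i \<le> i \<and> i \<le> (g \<circ> f) i + (z1 + z2)"
    if "i \<in> zero_set u" for i
    using f[OF that] g[of "f i"] by auto
  ultimately show ?thesis
    by (rule shift_matchingI)
qed

lemma shift_matching_Suc_split:
  assumes "shift_matching (Suc m) v w"
  shows "\<exists>u\<in>bin (length v). shift_matching m v u \<and> shift_matching 1 u w"
proof -
  obtain f where f_mono: "strict_mono_on (zero_set v) f"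
    and f: "\<And>i. i \<in> zero_set v \<Longrightarrow> f i \<in> zero_set w \<and> f i \<le> i \<and> i \<le> f i + Suc m"
    using assms by (metis shift_matchingE)
  define h where "h i = max (f i) (i - m)" for i
  have h_mono: "strict_mono_on (zero_set v) h"
  proof (rule strict_mono_onI)
    fix i i' assume "i \<in> zero_set v" "i' \<in> zero_set v" "i < i'"
    then have "f i < f i'"
      by (rule strict_mono_onD[OF f_mono])
    then show "h i < h i'"
      using \<open>i < i'\<close> unfolding h_def by auto
  qed
  have h: "h i \<le> i \<and> i \<le> h i + m \<and> f i \<le> h i \<and> h i \<le> f i + 1" if "i \<in> zero_set v" for i
    using f[OF that] unfolding h_def by auto
  define u :: "nat list" where "u = map (\<lambda>k. if k \<in> h ` zero_set v then 0 else 1) [0..<length v]"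
  have "u \<in> bin (length v)"
    unfolding u_def bin_def by auto
  moreover have zero_set_u: "zero_set u = h ` zero_set v"
    using h unfolding u_def zero_set_def by (fastforce split: if_splits)
  moreover have "shift_matching m v u"
    using h_mono by (rule shift_matchingI) (use h zero_set_u in auto)
  moreover have "shift_matching 1 u w"
  proof -
    define g where "g = f \<circ> the_inv_into (zero_set v) h"
    have g_h: "g (h i) = f i" if "i \<in> zero_set v" for i
      using the_inv_into_f_f[OF strict_mono_on_imp_inj_on[OF h_mono] that] by (simp add: g_def)
    have "strict_mono_on (zero_set u) g"
      unfolding zero_set_u
    proof (rule strict_mono_onI)
      fix k k' assume "k \<in> h ` zero_set v" "k' \<in> h ` zero_set v" "k < k'"
      then obtain i i' where "i \<in> zero_set v" "i' \<in> zero_set v" "k = h i" "k' = h i'" "h i < h i'"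
        by blast
      then show "g k < g k'"
        using g_h strict_mono_on_less[OF h_mono] strict_mono_onD[OF f_mono] by auto
    qed
    moreover have "g k \<in> zero_set w \<and> g k \<le> k \<and> k \<le> g k + 1" if "k \<in> zero_set u" for k
      using that[unfolded zero_set_u] g_h h f by auto
    ultimately show ?thesis
      by (rule shift_matchingI)
  qed
  ultimately show ?thesis
    by blast
qed

lemma finite_bin: "finite (bin n)"
  using finite_lists_length_eq[of "{0, 1 :: nat}" n] unfolding bin_def by (simp add: conj_commute)

lemma Apow_Suc_pos_iff:
  "0 < Apow n (Suc m) a b \<longleftrightarrow> (\<exists>c\<in>bin n. 0 < Apow n m a c \<and> 0 < A_entry c b)"
proof -
  have "Apow n (Suc m) a b = 0 \<longleftrightarrow> (\<forall>c\<in>bin n. Apow n m a c * A_entry c b = 0)"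
    using finite_bin by simp
  then show ?thesis
    by auto
qed

lemma A_entry_pos_iff:
  assumes "a \<in> bin n" "b \<in> bin n"
  shows "0 < A_entry a b \<longleftrightarrow> shift_matching 1 a b"
proof -
  have "zdom z a b \<Longrightarrow> 1 \<le> z" for z
    unfolding zdom_def using one_le_zval by simp
  then have "zdom 1 a b \<longleftrightarrow> (\<exists>z\<le>1. zdom z a b)"
    using le_antisym by blast
  then show ?thesis
    unfolding A_entry_def using shift_matching_iff_zdom[OF assms order_refl] by simp
qed

lemma Apow_pos_iff:
  assumes "0 < m" "a \<in> bin n" "b \<in> bin n"
  shows "0 < Apow n m a b \<longleftrightarrow> shift_matching m a b"
  using assms
proof (induction m arbitrary: b rule: nat_induct_non_zero)
  case 1
  then show ?case
    using Apow_Suc_pos_iff[of n 0 a b] A_entry_pos_iff by auto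
next
  case (Suc m)
  have "length a = n"
    using Suc.prems(1) by (simp add: bin_def)
  then have "(\<exists>c\<in>bin n. shift_matching m a c \<and> shift_matching 1 c b) \<longleftrightarrow> shift_matching (Suc m) a b"
    using shift_matching_Suc_split shift_matching_trans[of m a _ 1 b] by auto
  then show ?case
    using Apow_Suc_pos_iff[of n m a b] Suc A_entry_pos_iff by auto
qed

theorem lemma5p24:
  fixes n m :: nat and a b :: "nat list"
  assumes "n > 0" and "m > 0" and "a \<in> bin n" and "b \<in> bin n"
  shows "(Apow n m a b > 0 \<longrightarrow> Apow n (Suc m) a b > 0) \<and>
         (Apow n m a b > 0 \<longleftrightarrow> (\<exists>z\<le>m. zdom z a b))"
proof -
  have "Apow n m a b > 0 \<longleftrightarrow> shift_matching m a b"
    using Apow_pos_iff assms by blast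
  moreover have "Apow n (Suc m) a b > 0 \<longleftrightarrow> shift_matching (Suc m) a b"
    using Apow_pos_iff assms by blast
  moreover have "shift_matching m a b \<longleftrightarrow> (\<exists>z\<le>m. zdom z a b)"
    using shift_matching_iff_zdom assms by simp
  ultimately show ?thesis
    using shift_matching_mono[of m a b "Suc m"] by auto
qed

end
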